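(* Let $r>0$ and let $G$ be a hyperbolic uniform disk graph with radius $r$ with at least one vertex. Then $G$ has a vertex $v$ such that the set of neighbors of $v$ can be covered by three cliques of $G$, and there exist four points of $\mathbb{H}^2$ such that every disk of a neighbor of $v$ contains at least one of these four points.
   Context: $\mathbb{H}^2$ denotes the hyperbolic plane of Gaussian curvature $-1$. A hyperbolic uniform disk graph with radius $r$ is the intersection graph of a finite family of closed hyperbolic disks of radius $r$ in $\mathbb{H}^2$: vertices are the disks (identified with their centers), and two vertices are adjacent iff the disks intersect, i.e., iff their centers have hyperbolic distance at most $2r$. *)

theory Defs
  imports "HOL-Analysis.Analysis"
begin

text \<open>The hyperbolic plane of curvature -1, in the Poincare disk model:
  points are complex numbers of modulus < 1.\<close>
definition hyp_plane :: "complex set" where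
  "hyp_plane = {z. norm z < 1}"

definition hdist :: "complex \<Rightarrow> complex \<Rightarrow> real" where
  "hdist z w = arcosh (1 + 2 * (norm (z - w))^2 / ((1 - (norm z)^2) * (1 - (norm w)^2)))"

definition hdisk :: "complex \<Rightarrow> real \<Rightarrow> complex set" where
  "hdisk c r = {z \<in> hyp_plane. hdist c z \<le> r}"

text \<open>Hyperbolic uniform disk graph: finite vertex set V (the disks), centre map c.
  Two distinct vertices are adjacent iff their closed radius-r disks intersect,
  i.e. iff the centres are at hyperbolic distance at most 2r.\<close>
definition hudg_adj :: "('a \<Rightarrow> complex) \<Rightarrow> real \<Rightarrow> 'a \<Rightarrow> 'a \<Rightarrow> bool" where
  "hudg_adj c r u v \<longleftrightarrow> u \<noteq> v \<and> hdist (c u) (c v) \<le> 2 * r"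

definition hudg_neighbors :: "'a set \<Rightarrow> ('a \<Rightarrow> complex) \<Rightarrow> real \<Rightarrow> 'a \<Rightarrow> 'a set" where
  "hudg_neighbors V c r v = {u \<in> V. hudg_adj c r u v}"

definition hudg_clique :: "'a set \<Rightarrow> ('a \<Rightarrow> complex) \<Rightarrow> real \<Rightarrow> 'a set \<Rightarrow> bool" where
  "hudg_clique V c r K \<longleftrightarrow> K \<subseteq> V \<and> (\<forall>u\<in>K. \<forall>w\<in>K. u \<noteq> w \<longrightarrow> hudg_adj c r u w)"

end

theory Submission
  imports Defs
begin

text \<open>Map the Poincare disk to the upper half-plane by the Cayley transform and let \<open>v\<close>
  be a vertex of minimal height. After the isometry moving \<open>v\<close> to \<open>\<i>\<close>, hyperbolic disks are
  Euclidean disks and every neighbour of \<open>v\<close> lies in the part of the disk of radius \<open>2r\<close> about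
  \<open>v\<close> above the horocycle through \<open>v\<close>, which is now a horizontal line. The rays from \<open>v\<close> at
  the angles \<open>\<pi>/3\<close> and \<open>2\<pi>/3\<close> cut this region into three cones of hyperbolic diameter at
  most \<open>2r\<close>, whence the three cliques. The same region is covered by four disks of radius
  \<open>r\<close>, one just above \<open>v\<close> and three further out: on each cone this follows from the
  convexity of disks once finitely many points are known to be covered, and those finitely many
  inequalities are polynomial in \<open>L = tanh (r/2)\<close>, certified by nonnegative Bernstein
  coefficients on \<open>[0, 1]\<close>.\<close>

section \<open>The upper half-plane model\<close>

definition cayley :: "complex \<Rightarrow> complex" where
  "cayley z = \<i> * (1 + z) / (1 - z)"

definition cayley_inv :: "complex \<Rightarrow> complex" where
  "cayley_inv w = (w - \<i>) / (w + \<i>)"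

lemma Im_cayley:
  assumes "norm z < 1"
  shows "Im (cayley z) = (1 - (norm z)\<^sup>2) / (norm (1 - z))\<^sup>2"
  unfolding cayley_def cmod_power2 by (simp add: Im_divide power2_eq_square algebra_simps)

lemma Im_cayley_pos:
  assumes "norm z < 1"
  shows "Im (cayley z) > 0"
proof -
  have "(norm z)\<^sup>2 < 1" using assms by (simp add: power_less_one_iff)
  moreover have "1 - z \<noteq> 0" using assms by auto
  ultimately show ?thesis unfolding Im_cayley[OF assms] by simp
qed

lemma norm_cayley_diff:
  assumes "norm z1 < 1" "norm z2 < 1"
  shows "(norm (cayley z1 - cayley z2))\<^sup>2 =
    4 * (norm (z1 - z2))\<^sup>2 / ((norm (1 - z1))\<^sup>2 * (norm (1 - z2))\<^sup>2)"
proof -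
  have "1 - z1 \<noteq> 0" "1 - z2 \<noteq> 0" using assms by auto
  then have "cayley z1 - cayley z2 = 2 * \<i> * (z1 - z2) / ((1 - z1) * (1 - z2))"
    unfolding cayley_def by (simp add: divide_simps) (simp add: algebra_simps)
  then show ?thesis by (simp add: norm_mult norm_divide power_divide power_mult_distrib)
qed

lemma hdist_cayley:
  assumes "norm z1 < 1" "norm z2 < 1"
  shows "hdist z1 z2 =
    arcosh (1 + (norm (cayley z1 - cayley z2))\<^sup>2 / (2 * Im (cayley z1) * Im (cayley z2)))"
proof -
  have ratio: "2 * N / (a * b) = (4 * N / (p * q)) / (2 * (a / p) * (b / q))"
    if "a > 0" "b > 0" "p > 0" "q > 0" for N a b p q :: real
    using that by (simp add: field_simps)
  have "1 - (norm z1)\<^sup>2 > 0" "1 - (norm z2)\<^sup>2 > 0"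
    using assms by (simp_all add: power_less_one_iff)
  moreover have "(norm (1 - z1))\<^sup>2 > 0" "(norm (1 - z2))\<^sup>2 > 0" using assms by auto
  ultimately have "2 * (norm (z1 - z2))\<^sup>2 / ((1 - (norm z1)\<^sup>2) * (1 - (norm z2)\<^sup>2)) =
      (norm (cayley z1 - cayley z2))\<^sup>2 / (2 * Im (cayley z1) * Im (cayley z2))"
    unfolding norm_cayley_diff[OF assms] Im_cayley[OF assms(1)] Im_cayley[OF assms(2)]
    by (rule ratio)
  then show ?thesis unfolding hdist_def by (simp add: mult.assoc)
qed

lemma cayley_inv_in_disk:
  assumes "Im w > 0"
  shows "norm (cayley_inv w) < 1"
proof -
  have "(norm (w - \<i>))\<^sup>2 < (norm (w + \<i>))\<^sup>2"
    using assms unfolding cmod_power2 by (simp add: power2_eq_square algebra_simps)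
  then have "norm (w - \<i>) < norm (w + \<i>)"
    by (meson norm_ge_zero power_less_imp_less_base)
  then show ?thesis unfolding cayley_inv_def by (simp add: norm_divide divide_less_eq)
qed

lemma cayley_cayley_inv:
  assumes "Im w > 0"
  shows "cayley (cayley_inv w) = w"
proof -
  have ne: "w + \<i> \<noteq> 0" using assms by (auto simp: complex_eq_iff)
  have diff: "1 - cayley_inv w = 2 * \<i> / (w + \<i>)" and sum: "1 + cayley_inv w = 2 * w / (w + \<i>)"
    unfolding cayley_inv_def using ne by (simp_all add: field_simps)
  have "\<i> * (w * 2) - 2 = 2 * \<i> * (w + \<i>)" by (simp add: algebra_simps)
  then have "\<i> * (w * 2) - 2 \<noteq> 0" using ne by simp
  then show ?thesis unfolding cayley_def diff sum using ne by (simp add: field_simps)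
qed

lemma arcosh_le_iff:
  fixes x R :: real
  assumes "x \<ge> 1" "R \<ge> 0"
  shows "arcosh x \<le> R \<longleftrightarrow> x \<le> cosh R"
  using arcosh_less_iff_real[of "cosh R" x] assms cosh_real_ge_1[of R] arcosh_cosh_real[OF assms(2)]
  by (auto simp: not_less[symmetric])

text \<open>For fixed \<open>(p, q)\<close>, \<open>disk_form t _ _ p q \<le> 0\<close> is a Euclidean disk; in the relative
  coordinates below it is the hyperbolic disk of radius \<open>arcosh (1 + t)\<close> about the point with
  coordinates \<open>(p, q)\<close>.\<close>
definition disk_form :: "real \<Rightarrow> real \<Rightarrow> real \<Rightarrow> real \<Rightarrow> real \<Rightarrow> real" where
  "disk_form t a b p q = (a - p)\<^sup>2 + (b - q)\<^sup>2 - 2 * t * (1 + b) * (1 + q)"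

text \<open>Coordinates relative to \<open>v\<close>: with \<open>w0 = cayley v\<close>, the isometry
  \<open>w \<mapsto> (w - Re w0) / Im w0\<close> of the upper half-plane moves \<open>w0\<close> to \<open>\<i>\<close>, and the second
  coordinate is shifted so that \<open>v\<close> becomes the origin.\<close>
definition rel_x :: "complex \<Rightarrow> complex \<Rightarrow> real" where
  "rel_x v z = (Re (cayley z) - Re (cayley v)) / Im (cayley v)"

definition rel_y :: "complex \<Rightarrow> complex \<Rightarrow> real" where
  "rel_y v z = Im (cayley z) / Im (cayley v) - 1"

definition rel_point :: "complex \<Rightarrow> real \<Rightarrow> real \<Rightarrow> complex" where
  "rel_point v a b = cayley_inv (Complex (Re (cayley v) + Im (cayley v) * a) (Im (cayley v) * (1 + b)))"

lemma rel_xy_self [simp]: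
  assumes "norm v < 1"
  shows "rel_x v v = 0" "rel_y v v = 0"
  using Im_cayley_pos[OF assms] by (simp_all add: rel_x_def rel_y_def)

lemma rel_y_nonneg_iff:
  assumes "norm v < 1"
  shows "rel_y v z \<ge> 0 \<longleftrightarrow> Im (cayley v) \<le> Im (cayley z)"
  using Im_cayley_pos[OF assms] by (simp add: rel_y_def field_simps)

lemma rel_point_coords:
  assumes "norm v < 1" "b > -1"
  shows "norm (rel_point v a b) < 1" "rel_x v (rel_point v a b) = a" "rel_y v (rel_point v a b) = b"
proof -
  have Y: "Im (cayley v) > 0" by (rule Im_cayley_pos[OF assms(1)])
  then have im: "Im (Complex (Re (cayley v) + Im (cayley v) * a) (Im (cayley v) * (1 + b))) > 0"
    using assms(2) by simp
  show "norm (rel_point v a b) < 1" unfolding rel_point_def by (rule cayley_inv_in_disk[OF im])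
  show "rel_x v (rel_point v a b) = a" "rel_y v (rel_point v a b) = b"
    unfolding rel_point_def rel_x_def rel_y_def cayley_cayley_inv[OF im] using Y by simp_all
qed

lemma hdist_le_iff_disk_form:
  assumes "norm v < 1" "norm z1 < 1" "norm z2 < 1" "R \<ge> 0"
  shows "hdist z1 z2 \<le> R \<longleftrightarrow>
    disk_form (cosh R - 1) (rel_x v z1) (rel_y v z1) (rel_x v z2) (rel_y v z2) \<le> 0"
proof -
  define w1 w2 where "w1 = cayley z1" and "w2 = cayley z2"
  define Y where "Y = Im (cayley v)"
  have Y: "Y > 0" unfolding Y_def by (rule Im_cayley_pos[OF assms(1)])
  have w: "Im w1 > 0" "Im w2 > 0" unfolding w1_def w2_def using Im_cayley_pos assms by auto
  define D where "D = (norm (w1 - w2))\<^sup>2"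
  have "1 + D / (2 * Im w1 * Im w2) \<ge> 1" unfolding D_def using w by simp
  then have "hdist z1 z2 \<le> R \<longleftrightarrow> 1 + D / (2 * Im w1 * Im w2) \<le> cosh R"
    unfolding hdist_cayley[OF assms(2,3)] D_def w1_def w2_def using arcosh_le_iff assms(4) by blast
  also have "\<dots> \<longleftrightarrow> D \<le> 2 * (cosh R - 1) * Im w1 * Im w2"
    using w by (simp add: field_simps)
  also have "\<dots> \<longleftrightarrow> D / Y\<^sup>2 \<le> 2 * (cosh R - 1) * Im w1 * Im w2 / Y\<^sup>2"
    using Y by (simp add: divide_le_cancel)
  also have "\<dots> \<longleftrightarrow> disk_form (cosh R - 1) (rel_x v z1) (rel_y v z1) (rel_x v z2) (rel_y v z2) \<le> 0"
  proof -
    have "D / Y\<^sup>2 = (rel_x v z1 - rel_x v z2)\<^sup>2 + (rel_y v z1 - rel_y v z2)\<^sup>2"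
      unfolding D_def cmod_power2 rel_x_def rel_y_def w1_def w2_def Y_def[symmetric]
      using Y by (simp add: field_simps power2_eq_square)
    moreover have "2 * (cosh R - 1) * Im w1 * Im w2 / Y\<^sup>2 =
        2 * (cosh R - 1) * (1 + rel_y v z1) * (1 + rel_y v z2)"
      unfolding rel_y_def w1_def w2_def Y_def[symmetric] using Y
      by (simp add: field_simps power2_eq_square)
    ultimately show ?thesis unfolding disk_form_def by simp
  qed
  finally show ?thesis .
qed

section \<open>Cones in the upper neighbourhood\<close>

text \<open>For \<open>s = cosh (2 r) - 1\<close>, the relative coordinates of the neighbours of a vertex of minimal
  height.\<close>
definition upper_nbhd :: "real \<Rightarrow> real \<Rightarrow> real \<Rightarrow> bool" where
  "upper_nbhd s a b \<longleftrightarrow> 0 \<le> b \<and> disk_form s a b 0 0 \<le> 0"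

lemma disk_form_convex:
  assumes "0 \<le> \<theta>" "\<theta> \<le> 1" "disk_form t x1 y1 p q \<le> 0" "disk_form t x2 y2 p q \<le> 0"
  shows "disk_form t (\<theta> * x1 + (1 - \<theta>) * x2) (\<theta> * y1 + (1 - \<theta>) * y2) p q \<le> 0"
proof -
  have "disk_form t (\<theta> * x1 + (1 - \<theta>) * x2) (\<theta> * y1 + (1 - \<theta>) * y2) p q =
      \<theta> * disk_form t x1 y1 p q + (1 - \<theta>) * disk_form t x2 y2 p q
      - \<theta> * (1 - \<theta>) * ((x1 - x2)\<^sup>2 + (y1 - y2)\<^sup>2)"
    unfolding disk_form_def by algebra
  moreover have "\<theta> * (1 - \<theta>) * ((x1 - x2)\<^sup>2 + (y1 - y2)\<^sup>2) \<ge> 0" using assms by simp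
  moreover have "\<theta> * disk_form t x1 y1 p q \<le> 0" "(1 - \<theta>) * disk_form t x2 y2 p q \<le> 0"
    using assms by (simp_all add: mult_nonneg_nonpos)
  ultimately show ?thesis by linarith
qed

lemma disk_form_diff_affine:
  "disk_form t (l * x1 + m * x2) (l * y1 + m * y2) p q
     - disk_form s (l * x1 + m * x2) (l * y1 + m * y2) 0 0
   = (1 - l - m) * (disk_form t 0 0 p q - disk_form s 0 0 0 0)
     + l * (disk_form t x1 y1 p q - disk_form s x1 y1 0 0)
     + m * (disk_form t x2 y2 p q - disk_form s x2 y2 0 0)"
  unfolding disk_form_def by (simp add: power2_eq_square algebra_simps)

text \<open>Up to the segment \<open>[s0 e1, s0 e2]\<close> the cone is covered by the disk about \<open>(p0, q0)\<close>,
  up to the chord \<open>[e1, e2]\<close> by the disk about \<open>(p, q)\<close>, both by convexity. Beyond the chord,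
  the difference of the two circle equations is affine and decides.\<close>
lemma cone_covered_by_two_disks:
  assumes boundary: "disk_form s x1 y1 0 0 = 0" "disk_form s x2 y2 0 0 = 0"
    and s0: "0 < s0" "s0 < 1"
    and inner: "disk_form t 0 0 p0 q0 \<le> 0"
      "disk_form t (s0 * x1) (s0 * y1) p0 q0 \<le> 0" "disk_form t (s0 * x2) (s0 * y2) p0 q0 \<le> 0"
    and outer: "disk_form t (s0 * x1) (s0 * y1) p q \<le> 0" "disk_form t (s0 * x2) (s0 * y2) p q \<le> 0"
      "disk_form t x1 y1 p q \<le> 0" "disk_form t x2 y2 p q \<le> 0"
    and slope:
      "disk_form t x1 y1 p q - disk_form s x1 y1 0 0 \<le> disk_form t 0 0 p q - disk_form s 0 0 0 0"
      "disk_form t x2 y2 p q - disk_form s x2 y2 0 0 \<le> disk_form t 0 0 p q - disk_form s 0 0 0 0"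
    and lm: "l \<ge> 0" "m \<ge> 0"
    and u: "disk_form s (l * x1 + m * x2) (l * y1 + m * y2) 0 0 \<le> 0"
  shows "disk_form t (l * x1 + m * x2) (l * y1 + m * y2) p0 q0 \<le> 0 \<or>
         disk_form t (l * x1 + m * x2) (l * y1 + m * y2) p q \<le> 0"
proof (cases "l + m \<le> 1")
  case False
  define g where "g x y = disk_form t x y p q - disk_form s x y 0 0" for x y
  define M where "M = max (g x1 y1) (g x2 y2)"
  have M: "M \<le> 0" "M \<le> g 0 0" unfolding M_def g_def using boundary outer slope by auto
  have "l * g x1 y1 + m * g x2 y2 \<le> l * M + m * M"
    unfolding M_def using lm by (intro add_mono mult_left_mono) auto
  moreover have "(1 - l - m) * g 0 0 \<le> (1 - l - m) * M"
    using False M(2) by (intro mult_left_mono_neg) auto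
  moreover have "g (l * x1 + m * x2) (l * y1 + m * y2) = (1 - l - m) * g 0 0 + l * g x1 y1 + m * g x2 y2"
    unfolding g_def by (rule disk_form_diff_affine)
  ultimately have "g (l * x1 + m * x2) (l * y1 + m * y2) \<le> M"
    by (simp add: algebra_simps)
  then show ?thesis using u M(1) unfolding g_def by simp
next
  case True
  show ?thesis
  proof (cases "l + m = 0")
    case True
    then have "l = 0" "m = 0" using lm by auto
    then show ?thesis using inner(1) by simp
  next
    case False
    define \<sigma> where "\<sigma> = l + m"
    define \<theta> where "\<theta> = l / \<sigma>"
    have \<sigma>: "0 < \<sigma>" "\<sigma> \<le> 1" using False lm \<open>l + m \<le> 1\<close> unfolding \<sigma>_def by auto
    have \<theta>: "0 \<le> \<theta>" "\<theta> \<le> 1" "l = \<sigma> * \<theta>" "m = \<sigma> * (1 - \<theta>)"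
      using lm \<sigma> unfolding \<theta>_def \<sigma>_def by (auto simp: field_simps)
    define wx wy where "wx = \<theta> * x1 + (1 - \<theta>) * x2" and "wy = \<theta> * y1 + (1 - \<theta>) * y2"
    have u_eq: "l * x1 + m * x2 = \<sigma> * wx" "l * y1 + m * y2 = \<sigma> * wy"
      unfolding wx_def wy_def \<theta> by algebra+
    have scaled: "s0 * wx = \<theta> * (s0 * x1) + (1 - \<theta>) * (s0 * x2)"
        "s0 * wy = \<theta> * (s0 * y1) + (1 - \<theta>) * (s0 * y2)"
      unfolding wx_def wy_def by algebra+
    show ?thesis
    proof (cases "\<sigma> \<le> s0")
      case True
      define \<phi> where "\<phi> = \<sigma> / s0"
      have \<phi>: "0 \<le> \<phi>" "\<phi> \<le> 1" "\<sigma> = \<phi> * s0" using True \<sigma> s0 unfolding \<phi>_def by auto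
      have "disk_form t (s0 * wx) (s0 * wy) p0 q0 \<le> 0"
        unfolding scaled by (rule disk_form_convex[OF \<theta>(1,2) inner(2,3)])
      from disk_form_convex[OF \<phi>(1,2) this inner(1)]
      have "disk_form t (\<sigma> * wx) (\<sigma> * wy) p0 q0 \<le> 0" by (simp add: \<phi>(3) mult.assoc)
      then show ?thesis unfolding u_eq by simp
    next
      case False
      define \<phi> where "\<phi> = (1 - \<sigma>) / (1 - s0)"
      have "1 - s0 > 0" using s0 by simp
      then have "\<phi> * (1 - s0) = 1 - \<sigma>" unfolding \<phi>_def by simp
      then have "\<phi> - \<phi> * s0 = 1 - \<sigma>" by (simp only: right_diff_distrib mult_1_right)
      moreover have "0 \<le> \<phi>" "\<phi> \<le> 1"
        using False \<sigma> \<open>1 - s0 > 0\<close> unfolding \<phi>_def by (auto simp: field_simps)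
      ultimately have \<phi>: "0 \<le> \<phi>" "\<phi> \<le> 1" "\<sigma> = \<phi> * s0 + (1 - \<phi>)" by linarith+
      have "disk_form t (s0 * wx) (s0 * wy) p q \<le> 0"
        unfolding scaled by (rule disk_form_convex[OF \<theta>(1,2) outer(1,2)])
      moreover have "disk_form t wx wy p q \<le> 0"
        unfolding wx_def wy_def by (rule disk_form_convex[OF \<theta>(1,2) outer(3,4)])
      ultimately have "disk_form t (\<phi> * (s0 * wx) + (1 - \<phi>) * wx) (\<phi> * (s0 * wy) + (1 - \<phi>) * wy) p q \<le> 0"
        by (rule disk_form_convex[OF \<phi>(1,2)])
      moreover have "\<phi> * (s0 * wx) + (1 - \<phi>) * wx = \<sigma> * wx" "\<phi> * (s0 * wy) + (1 - \<phi>) * wy = \<sigma> * wy"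
        unfolding \<phi>(3) by algebra+
      ultimately show ?thesis unfolding u_eq by simp
    qed
  qed
qed

lemma disk_form_cone_bound:
  assumes "l \<ge> 0" "m \<ge> 0" "disk_form s x1 y1 0 0 \<le> 0" "disk_form s x2 y2 0 0 \<le> 0"
  shows "disk_form s (l * x1 + m * x2) (l * y1 + m * y2) 0 0
    \<le> 2 * s * (l + m - 1) * (l + m + 1 + (l * y1 + m * y2))"
proof -
  have "(l * x1 + m * x2)\<^sup>2 + (l * y1 + m * y2)\<^sup>2 =
      (l + m) * (l * (x1\<^sup>2 + y1\<^sup>2) + m * (x2\<^sup>2 + y2\<^sup>2)) - l * m * ((x1 - x2)\<^sup>2 + (y1 - y2)\<^sup>2)"
    by algebra
  also have "\<dots> \<le> (l + m) * (l * (x1\<^sup>2 + y1\<^sup>2) + m * (x2\<^sup>2 + y2\<^sup>2))"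
    using assms by simp
  also have "\<dots> \<le> (l + m) * (l * (2 * s * (1 + y1)) + m * (2 * s * (1 + y2)))"
    using assms unfolding disk_form_def by (intro mult_left_mono add_mono) auto
  finally show ?thesis unfolding disk_form_def by (simp add: algebra_simps power2_eq_square)
qed

lemma disk_form_cone_bound_min:
  assumes "l \<ge> 0" "m \<ge> 0" "0 \<le> y1" "0 \<le> y2" "s > 0"
    and "disk_form s x1 y1 0 0 \<le> 0" "disk_form s x2 y2 0 0 \<le> 0"
    and u: "disk_form s (l * x1 + m * x2) (l * y1 + m * y2) 0 0 \<le> 0"
  shows "disk_form s (l * x1 + m * x2) (l * y1 + m * y2) 0 0 \<le> 2 * s * ((min (l + m) 1)\<^sup>2 - 1)"
proof (cases "l + m \<le> 1")
  case True
  have "(l + m - 1) * (l * y1 + m * y2) \<le> 0"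
    using True assms by (intro mult_nonpos_nonneg) auto
  then have "2 * s * ((l + m - 1) * (l * y1 + m * y2)) \<le> 0"
    using \<open>s > 0\<close> by (simp add: mult_nonneg_nonpos)
  moreover have "2 * s * (l + m - 1) * (l + m + 1 + (l * y1 + m * y2)) =
      2 * s * ((l + m)\<^sup>2 - 1) + 2 * s * ((l + m - 1) * (l * y1 + m * y2))"
    by algebra
  ultimately have "2 * s * (l + m - 1) * (l + m + 1 + (l * y1 + m * y2)) \<le> 2 * s * ((l + m)\<^sup>2 - 1)"
    by linarith
  with disk_form_cone_bound[OF assms(1,2,6,7)] show ?thesis using True by simp
qed (use u in simp)

text \<open>The bilinear form \<open>x x' + (s + 1) y y'\<close> arises from expanding \<open>disk_form s u u'\<close>; bounding
  it below on the generators bounds the distance between any two points of the cone.\<close>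
lemma cone_pairwise_close:
  assumes s: "s > 0"
    and gen: "0 \<le> y1" "0 \<le> y2" "disk_form s x1 y1 0 0 \<le> 0" "disk_form s x2 y2 0 0 \<le> 0"
    and B11: "s \<le> x1 * x1 + (s + 1) * y1 * y1"
    and B12: "s \<le> x1 * x2 + (s + 1) * y1 * y2"
    and B22: "s \<le> x2 * x2 + (s + 1) * y2 * y2"
    and lm: "l1 \<ge> 0" "m1 \<ge> 0" "l2 \<ge> 0" "m2 \<ge> 0"
    and u1: "disk_form s (l1 * x1 + m1 * x2) (l1 * y1 + m1 * y2) 0 0 \<le> 0"
    and u2: "disk_form s (l2 * x1 + m2 * x2) (l2 * y1 + m2 * y2) 0 0 \<le> 0"
  shows "disk_form s (l1 * x1 + m1 * x2) (l1 * y1 + m1 * y2) (l2 * x1 + m2 * x2) (l2 * y1 + m2 * y2) \<le> 0"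
proof -
  define a1 b1 a2 b2 where "a1 = l1 * x1 + m1 * x2" and "b1 = l1 * y1 + m1 * y2"
    and "a2 = l2 * x1 + m2 * x2" and "b2 = l2 * y1 + m2 * y2"
  define \<sigma>1 \<sigma>2 where "\<sigma>1 = min (l1 + m1) 1" and "\<sigma>2 = min (l2 + m2) 1"
  have \<sigma>: "0 \<le> \<sigma>1" "\<sigma>1 \<le> 1" "0 \<le> \<sigma>2" "\<sigma>2 \<le> 1" "\<sigma>1 \<le> l1 + m1" "\<sigma>2 \<le> l2 + m2"
    unfolding \<sigma>1_def \<sigma>2_def using lm by auto
  have "a1 * a2 + (s + 1) * b1 * b2 = l1 * l2 * (x1 * x1 + (s + 1) * y1 * y1)
      + (l1 * m2 + m1 * l2) * (x1 * x2 + (s + 1) * y1 * y2) + m1 * m2 * (x2 * x2 + (s + 1) * y2 * y2)"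
    unfolding a1_def a2_def b1_def b2_def by algebra
  also have "\<dots> \<ge> l1 * l2 * s + (l1 * m2 + m1 * l2) * s + m1 * m2 * s"
    using B11 B12 B22 lm by (intro add_mono mult_left_mono) auto
  finally have "a1 * a2 + (s + 1) * b1 * b2 \<ge> s * ((l1 + m1) * (l2 + m2))"
    by (simp add: algebra_simps)
  moreover have "s * (\<sigma>1 * \<sigma>2) \<le> s * ((l1 + m1) * (l2 + m2))"
    using s \<sigma> by (intro mult_left_mono mult_mono) auto
  ultimately have bilinear: "a1 * a2 + (s + 1) * b1 * b2 \<ge> s * (\<sigma>1 * \<sigma>2)"
    by linarith
  have "disk_form s a1 b1 0 0 \<le> 2 * s * (\<sigma>1\<^sup>2 - 1)" "disk_form s a2 b2 0 0 \<le> 2 * s * (\<sigma>2\<^sup>2 - 1)"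
    unfolding a1_def b1_def a2_def b2_def \<sigma>1_def \<sigma>2_def
    using disk_form_cone_bound_min[OF _ _ gen(1,2) s gen(3,4)] lm u1 u2 by auto
  moreover have "\<sigma>1\<^sup>2 + \<sigma>2\<^sup>2 - \<sigma>1 * \<sigma>2 \<le> 1"
  proof -
    have "\<sigma>1\<^sup>2 + \<sigma>2\<^sup>2 - \<sigma>1 * \<sigma>2 \<le> (max \<sigma>1 \<sigma>2)\<^sup>2"
    proof (cases "\<sigma>1 \<le> \<sigma>2")
      case True
      then have "\<sigma>1 * \<sigma>1 \<le> \<sigma>1 * \<sigma>2" using \<sigma> by (intro mult_left_mono) auto
      then show ?thesis using True by (simp add: max_def power2_eq_square)
    next
      case False
      then have "\<sigma>2 * \<sigma>2 \<le> \<sigma>1 * \<sigma>2" using \<sigma> by (intro mult_right_mono) auto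
      then show ?thesis using False by (simp add: max_def power2_eq_square)
    qed
    also have "\<dots> \<le> 1" using \<sigma> by (simp add: max_def power_le_one)
    finally show ?thesis .
  qed
  moreover have "disk_form s a1 b1 a2 b2 =
      disk_form s a1 b1 0 0 + disk_form s a2 b2 0 0 + 2 * s - 2 * (a1 * a2 + (s + 1) * b1 * b2)"
    unfolding disk_form_def by algebra
  ultimately have "disk_form s a1 b1 a2 b2 \<le> 2 * s * (\<sigma>1\<^sup>2 + \<sigma>2\<^sup>2 - \<sigma>1 * \<sigma>2 - 1)"
    using bilinear by (simp add: algebra_simps)
  also have "\<dots> \<le> 0"
    using s \<open>\<sigma>1\<^sup>2 + \<sigma>2\<^sup>2 - \<sigma>1 * \<sigma>2 \<le> 1\<close> by (simp add: mult_nonneg_nonpos)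
  finally show ?thesis unfolding a1_def b1_def a2_def b2_def .
qed

lemma disk_form_mirror: "disk_form s (- a1) b1 (- a2) b2 = disk_form s a1 b1 a2 b2"
  unfolding disk_form_def by (simp add: power2_eq_square algebra_simps)

lemma upper_nbhd_mirror: "upper_nbhd s (- a) b \<longleftrightarrow> upper_nbhd s a b"
  unfolding upper_nbhd_def using disk_form_mirror[of s a b 0 0] by simp

text \<open>The three sectors are the cones between the rays at the angles \<open>0, \<pi>/3, 2\<pi>/3, \<pi>\<close>;
  with \<open>k = \<surd>(s/2)\<close> and \<open>h = \<surd>3 k\<close>, they are spanned by \<open>(2k, 0)\<close> and \<open>(\<plusminus>k, h)\<close>.\<close>
lemma sector_generators:
  assumes s: "s > 0"
  defines "k \<equiv> sqrt (s / 2)" and "h \<equiv> sqrt 3 * sqrt (s / 2)"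
  shows "k > 0" "h > 0" "h = sqrt 3 * k"
    and "disk_form s (2 * k) 0 0 0 \<le> 0" "disk_form s k h 0 0 \<le> 0" "disk_form s (- k) h 0 0 \<le> 0"
    and "s \<le> (2 * k) * (2 * k) + (s + 1) * 0 * 0" "s \<le> (2 * k) * k + (s + 1) * 0 * h"
      "s \<le> k * k + (s + 1) * h * h" "s \<le> k * (- k) + (s + 1) * h * h"
      "s \<le> (- k) * (- k) + (s + 1) * h * h"
proof -
  show k: "k > 0" and h: "h > 0" "h = sqrt 3 * k"
    unfolding k_def h_def using s by auto
  have kk: "k * k = s / 2" and hh: "h * h = 3 * s / 2"
    unfolding k_def h_def using s by (simp_all add: algebra_simps)
  have "0 \<le> s * h" using s h by simp
  then show "disk_form s (2 * k) 0 0 0 \<le> 0" "disk_form s k h 0 0 \<le> 0" "disk_form s (- k) h 0 0 \<le> 0"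
    unfolding disk_form_def using kk hh by (simp_all add: power2_eq_square algebra_simps)
  have "(s + 1) * h * h = h * h + s * (h * h)" by algebra
  moreover have "0 \<le> s * (h * h)" using s by simp
  moreover have "(2 * k) * (2 * k) = 4 * (k * k)" "(2 * k) * k = 2 * (k * k)"
    "k * (- k) = - (k * k)" "(- k) * (- k) = k * k" by algebra+
  ultimately show "s \<le> (2 * k) * (2 * k) + (s + 1) * 0 * 0" "s \<le> (2 * k) * k + (s + 1) * 0 * h"
      "s \<le> k * k + (s + 1) * h * h" "s \<le> k * (- k) + (s + 1) * h * h"
      "s \<le> (- k) * (- k) + (s + 1) * h * h"
    using kk hh s by linarith+
qed

lemma right_sector_close:
  assumes s: "s > 0" and u: "upper_nbhd s a1 b1" "upper_nbhd s a2 b2"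
    and sector: "b1 \<le> sqrt 3 * a1" "b2 \<le> sqrt 3 * a2"
  shows "disk_form s a1 b1 a2 b2 \<le> 0"
proof -
  obtain k h where k: "k > 0" and h: "h > 0" "h = sqrt 3 * k"
    and gen: "disk_form s (2 * k) 0 0 0 \<le> 0" "disk_form s k h 0 0 \<le> 0"
    and bilinear: "s \<le> (2 * k) * (2 * k) + (s + 1) * 0 * 0" "s \<le> (2 * k) * k + (s + 1) * 0 * h"
      "s \<le> k * k + (s + 1) * h * h"
    using sector_generators[OF s] by blast
  define l1 m1 l2 m2 where "l1 = (a1 - k * b1 / h) / (2 * k)" and "m1 = b1 / h"
    and "l2 = (a2 - k * b2 / h) / (2 * k)" and "m2 = b2 / h"
  have lm: "l1 \<ge> 0" "m1 \<ge> 0" "l2 \<ge> 0" "m2 \<ge> 0"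
    using sector u k h unfolding l1_def m1_def l2_def m2_def upper_nbhd_def
    by (auto simp: field_simps)
  have coords: "a1 = l1 * (2 * k) + m1 * k" "b1 = l1 * 0 + m1 * h"
      "a2 = l2 * (2 * k) + m2 * k" "b2 = l2 * 0 + m2 * h"
    unfolding l1_def m1_def l2_def m2_def using k h by (simp_all add: field_simps)
  show ?thesis
    using cone_pairwise_close[OF s order_refl _ gen bilinear lm] u h
    unfolding upper_nbhd_def coords[symmetric] by simp
qed

lemma middle_sector_close:
  assumes s: "s > 0" and u: "upper_nbhd s a1 b1" "upper_nbhd s a2 b2"
    and sector: "sqrt 3 * \<bar>a1\<bar> \<le> b1" "sqrt 3 * \<bar>a2\<bar> \<le> b2"
  shows "disk_form s a1 b1 a2 b2 \<le> 0"
proof -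
  obtain k h where k: "k > 0" and h: "h > 0" "h = sqrt 3 * k"
    and gen: "disk_form s k h 0 0 \<le> 0" "disk_form s (- k) h 0 0 \<le> 0"
    and bilinear: "s \<le> k * k + (s + 1) * h * h" "s \<le> k * (- k) + (s + 1) * h * h"
      "s \<le> (- k) * (- k) + (s + 1) * h * h"
    using sector_generators[OF s] by blast
  define l1 m1 l2 m2 where "l1 = (a1 / k + b1 / h) / 2" and "m1 = (b1 / h - a1 / k) / 2"
    and "l2 = (a2 / k + b2 / h) / 2" and "m2 = (b2 / h - a2 / k) / 2"
  have "\<bar>a1\<bar> / k \<le> b1 / h" "\<bar>a2\<bar> / k \<le> b2 / h"
    using sector k h by (simp_all add: field_simps)
  moreover have "a1 / k \<le> \<bar>a1\<bar> / k" "- a1 / k \<le> \<bar>a1\<bar> / k" "a2 / k \<le> \<bar>a2\<bar> / k" "- a2 / k \<le> \<bar>a2\<bar> / k"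
    using k by (intro divide_right_mono; simp)+
  ultimately have lm: "l1 \<ge> 0" "m1 \<ge> 0" "l2 \<ge> 0" "m2 \<ge> 0"
    unfolding l1_def m1_def l2_def m2_def by simp_all
  have coords: "a1 = l1 * k + m1 * (- k)" "b1 = l1 * h + m1 * h"
      "a2 = l2 * k + m2 * (- k)" "b2 = l2 * h + m2 * h"
    unfolding l1_def m1_def l2_def m2_def using k h by (simp_all add: field_simps)
  show ?thesis
    using cone_pairwise_close[OF s _ _ gen bilinear lm] u h
    unfolding upper_nbhd_def coords[symmetric] by simp
qed

lemma left_sector_close:
  assumes "s > 0" "upper_nbhd s a1 b1" "upper_nbhd s a2 b2"
    and "b1 \<le> - (sqrt 3 * a1)" "b2 \<le> - (sqrt 3 * a2)"
  shows "disk_form s a1 b1 a2 b2 \<le> 0"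
  using right_sector_close[of s "- a1" b1 "- a2" b2] assms
  by (simp add: disk_form_mirror upper_nbhd_mirror)

section \<open>Four piercing points\<close>

text \<open>\<open>bernstein_sum [c\<^sub>0, \<dots>, c\<^sub>n] L = (\<Sum>i\<le>n. c\<^sub>i L\<^sup>i (1 - L)\<^bsup>n-i\<^esup>)\<close>. Every polynomial
  inequality behind the piercing points is proved by exhibiting its left-hand side as
  \<open>- L\<^sup>i (1 - L)\<^sup>j\<close> times such a sum with nonnegative coefficients.\<close>
fun bernstein_sum :: "real list \<Rightarrow> real \<Rightarrow> real" where
  "bernstein_sum [] L = 0"
| "bernstein_sum (c # cs) L = c * (1 - L) ^ length cs + L * bernstein_sum cs L"

lemma bernstein_sum_nonneg:
  assumes "list_all (\<lambda>c. 0 \<le> c) cs" "0 \<le> L" "L \<le> 1"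
  shows "0 \<le> bernstein_sum cs L"
  using assms(1) by (induction cs) (simp_all add: assms(2,3))

lemma nonpos_by_bernstein_certificate:
  fixes p L :: real
  assumes "p = - (L ^ i * (1 - L) ^ j * bernstein_sum cs L)"
    and "list_all (\<lambda>c. 0 \<le> c) cs" "0 \<le> L" "L \<le> 1"
  shows "p \<le> 0"
  using bernstein_sum_nonneg[OF assms(2-4)] assms(1,3,4) by simp

lemmas bernstein_certificate_simps = bernstein_sum.simps length_Cons list.size(3) power_Suc power_0
  power_one_right mult_zero_left mult_zero_right mult_1_left mult_1_right add_0_left add_0_right
  diff_zero power_zero_numeral

text \<open>Stated with right-hand side \<open>0\<close>, the form in which \<open>algebra\<close> uses a hypothesis.\<close>
lemma sqrt3_square: "(sqrt 3)\<^sup>2 - 3 = (0::real)"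
  by simp

lemma sqrt3_bounds: "4330127 / 2500000 \<le> sqrt (3::real)" "sqrt (3::real) \<le> 17320509 / 10000000"
proof -
  show "4330127 / 2500000 \<le> sqrt (3::real)"
    by (rule real_le_rsqrt) (simp add: power2_eq_square)
  have "sqrt 3 \<le> sqrt ((17320509 / 10000000::real)\<^sup>2)"
    by (rule real_sqrt_le_mono) (simp add: power2_eq_square)
  then show "sqrt (3::real) \<le> 17320509 / 10000000" by simp
qed

definition disk_form_cleared :: "real \<Rightarrow> real \<Rightarrow> real \<Rightarrow> real \<Rightarrow> real \<Rightarrow> real \<Rightarrow> real \<Rightarrow> real \<Rightarrow> real" where
  "disk_form_cleared tn td Ua Ub du Pa Pb dp =
    td * ((Ua * dp - Pa * du)\<^sup>2 + (Ub * dp - Pb * du)\<^sup>2) - 2 * tn * (du + Ub) * (dp + Pb) * du * dp"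

definition slope_cleared :: "real \<Rightarrow> real \<Rightarrow> real \<Rightarrow> real \<Rightarrow> real \<Rightarrow> real \<Rightarrow> real" where
  "slope_cleared L Ua Ub Pa Pb dp =
    - 2 * (Ua * Pa + Ub * Pb) * (1 - L\<^sup>2)\<^sup>2 + 2 * Ub * (8 * L\<^sup>2 * dp - 2 * L\<^sup>2 * (1 - L\<^sup>2) * (dp + Pb))"

lemma disk_form_nonpos_if_cleared:
  assumes "td > 0" "du > 0" "dp > 0" "disk_form_cleared tn td Ua Ub du Pa Pb dp \<le> 0"
  shows "disk_form (tn / td) (Ua / du) (Ub / du) (Pa / dp) (Pb / dp) \<le> 0"
proof -
  have "disk_form (tn / td) (Ua / du) (Ub / du) (Pa / dp) (Pb / dp) =
      disk_form_cleared tn td Ua Ub du Pa Pb dp / (td * du\<^sup>2 * dp\<^sup>2)"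
    unfolding disk_form_def disk_form_cleared_def using assms by (simp add: field_simps power2_eq_square)
  then show ?thesis using assms by (simp add: divide_nonpos_pos)
qed

lemma slope_le_if_cleared:
  assumes L: "0 < L" "L < 1" and "du > 0" "dp > 0" "slope_cleared L Ua Ub Pa Pb dp \<le> 0"
  defines "t \<equiv> 2 * L\<^sup>2 / (1 - L\<^sup>2)" and "s \<equiv> 8 * L\<^sup>2 / (1 - L\<^sup>2)\<^sup>2"
  shows "disk_form t (Ua / du) (Ub / du) (Pa / dp) (Pb / dp) - disk_form s (Ua / du) (Ub / du) 0 0
    \<le> disk_form t 0 0 (Pa / dp) (Pb / dp) - disk_form s 0 0 0 0"
proof -
  define D where "D = 1 - L\<^sup>2"
  have D: "D > 0" unfolding D_def using L by (simp add: power_less_one_iff)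
  define X where "X = disk_form t (Ua / du) (Ub / du) (Pa / dp) (Pb / dp)
    - disk_form s (Ua / du) (Ub / du) 0 0 - (disk_form t 0 0 (Pa / dp) (Pb / dp) - disk_form s 0 0 0 0)"
  have "X * (du * dp * D\<^sup>2) = slope_cleared L Ua Ub Pa Pb dp"
    unfolding X_def disk_form_def slope_cleared_def t_def s_def D_def[symmetric] using D assms(3,4)
    by (simp add: field_simps power2_eq_square)
  moreover have "du * dp * D\<^sup>2 > 0" using D assms(3,4) by simp
  ultimately have "X \<le> 0" using assms(5) by (metis mult_le_0_iff not_le)
  then show ?thesis unfolding X_def by simp
qed

text \<open>\<open>(split_x L / split_den L, split_y L / split_den L)\<close> is the point of the boundary circle of
  the upper neighbourhood given by a rational parametrisation of that circle, so that the
  certificates stay polynomial. It separates the right cone from the middle one.\<close>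
definition split_slope_num :: "real \<Rightarrow> real" where
  "split_slope_num L = (2 - sqrt 3) * (17 / 10) * (1 - L)"

definition split_slope_den :: "real \<Rightarrow> real" where
  "split_slope_den L = 17 / 10 + 3 / 10 * L"

definition split_den :: "real \<Rightarrow> real" where
  "split_den L = (1 - L) ^ 4 * (split_slope_den L)\<^sup>2 + (split_slope_num L)\<^sup>2 * (1 + L) ^ 4"

definition split_x :: "real \<Rightarrow> real" where
  "split_x L = split_slope_num L * split_slope_den L * ((1 + L) ^ 4 - (1 - L) ^ 4)"

definition split_y :: "real \<Rightarrow> real" where
  "split_y L = (1 + L)\<^sup>2 * (1 - L)\<^sup>2 * ((split_slope_den L)\<^sup>2 + (split_slope_num L)\<^sup>2) - split_den L"

text \<open>Numerators of the piercing points \<open>(0, pierce_low_y L)\<close>, \<open>(\<plusminus>pierce_side_x L, pierce_side_y L)\<close>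
  and \<open>(0, pierce_top_y L)\<close>, whose common denominator is \<open>1 - L\<^sup>2\<close>. The ratios \<open>cut_side L\<close>
  and \<open>cut_top L\<close> are the radial positions at which a cone passes from the disk about the low
  point to the disk about the outer point.\<close>
definition pierce_low_y :: "real \<Rightarrow> real" where
  "pierce_low_y L = 2 * L * (47 / 50 * L)"

definition pierce_side_x :: "real \<Rightarrow> real" where
  "pierce_side_x L = 2 * L * (3 / 2 * (1 - L) + 67 / 50 * L)"

definition pierce_side_y :: "real \<Rightarrow> real" where
  "pierce_side_y L = 2 * L * (sqrt 3 / 2 * (1 - L) + 29 / 25 * L)"

definition pierce_top_y :: "real \<Rightarrow> real" where
  "pierce_top_y L = 2 * L * (sqrt 3 * (1 - L) + 16 / 5 * L)"

definition cut_side :: "real \<Rightarrow> real" where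
  "cut_side L = 1 / 2 * (1 - L) + 17 / 50 * L"

definition cut_top :: "real \<Rightarrow> real" where
  "cut_top L = 1 / 2 * (1 - L) + 3 / 10 * L"

lemmas piercing_data_defs = disk_form_cleared_def slope_cleared_def split_slope_num_def
  split_slope_den_def split_den_def split_x_def split_y_def pierce_low_y_def pierce_side_x_def
  pierce_side_y_def pierce_top_y_def cut_side_def cut_top_def

lemma low_origin_cert:
  assumes "0 \<le> L" "L \<le> 1"
  shows "disk_form_cleared (2 * L\<^sup>2) (1 - L\<^sup>2) 0 0 1 0 (pierce_low_y L) (1 - L\<^sup>2) \<le> 0"
  apply (rule nonpos_by_bernstein_certificate[where i = 2 and j = 1 and cs = "[
      4, 16, 12491/625, 4982/625]", OF _ _ assms])
  subgoal unfolding piercing_data_defs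
    by (simp only: bernstein_certificate_simps) algebra
  subgoal by simp
  done

lemma low_side_cut_corner_cert:
  assumes "0 \<le> L" "L \<le> 1"
  shows "disk_form_cleared (2 * L\<^sup>2) (1 - L\<^sup>2)
    (cut_side L * (4 * L)) 0 (1 - L\<^sup>2) 0 (pierce_low_y L) (1 - L\<^sup>2) \<le> 0"
  apply (rule nonpos_by_bernstein_certificate[where i = 3 and j = 3 and cs = "[
      64/25, 2187/125, 5442/125, 5764/125, 2136/125]", OF _ _ assms])
  subgoal unfolding piercing_data_defs
    by (simp only: bernstein_certificate_simps) algebra
  subgoal by simp
  done

lemma low_side_cut_split_cert:
  assumes "0 \<le> L" "L \<le> 1"
  shows "disk_form_cleared (2 * L\<^sup>2) (1 - L\<^sup>2)
    (cut_side L * split_x L) (cut_side L * split_y L) (split_den L) 0 (pierce_low_y L) (1 - L\<^sup>2) \<le> 0"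
  apply (rule nonpos_by_bernstein_certificate[where i = 3 and j = 5 and cs = "[
      8686184/3125 - 24889258/15625 * sqrt 3, 17735306049/390625 - 10192598234/390625 * sqrt 3,
      131402163374/390625 - 75651609764/390625 * sqrt 3,
      581844597396/390625 - 335346318476/390625 * sqrt 3,
      1707394932304/390625 - 984702079648/390625 * sqrt 3,
      3475812257956/390625 - 2005381690688/390625 * sqrt 3,
      4980356072632/390625 - 574819455584/78125 * sqrt 3,
      4964570049024/390625 - 573074505952/78125 * sqrt 3,
      3292335354656/390625 - 1900364325056/390625 * sqrt 3,
      1307166332944/390625 - 754540287872/390625 * sqrt 3,
      234370852512/390625 - 135290027776/390625 * sqrt 3]", OF _ _ assms])
  subgoal using sqrt3_square unfolding piercing_data_defs
    by (simp only: bernstein_certificate_simps) algebra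
  subgoal using sqrt3_bounds by simp
  done

lemma low_top_cut_split_cert:
  assumes "0 \<le> L" "L \<le> 1"
  shows "disk_form_cleared (2 * L\<^sup>2) (1 - L\<^sup>2)
    (cut_top L * split_x L) (cut_top L * split_y L) (split_den L) 0 (pierce_low_y L) (1 - L\<^sup>2) \<le> 0"
  apply (rule nonpos_by_bernstein_certificate[where i = 3 and j = 5 and cs = "[
      52785272/15625 - 30234602/15625 * sqrt 3, 21492847057/390625 - 12348324374/390625 * sqrt 3,
      158846440318/390625 - 91436066108/390625 * sqrt 3,
      702011290668/390625 - 404565804364/390625 * sqrt 3,
      2057542031264/390625 - 1186582109472/390625 * sqrt 3,
      4187210123892/390625 - 2415764081296/390625 * sqrt 3,
      6003050704152/390625 - 3464239078848/390625 * sqrt 3,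
      5991733141152/390625 - 3458197462176/390625 * sqrt 3,
      3979794666336/390625 - 2297170517568/390625 * sqrt 3,
      1581924764368/390625 - 913142600064/390625 * sqrt 3,
      283549903904/390625 - 163679464192/390625 * sqrt 3]", OF _ _ assms])
  subgoal using sqrt3_square unfolding piercing_data_defs
    by (simp only: bernstein_certificate_simps) algebra
  subgoal using sqrt3_bounds by simp
  done

lemma side_side_cut_corner_cert:
  assumes "0 \<le> L" "L \<le> 1"
  shows "disk_form_cleared (2 * L\<^sup>2) (1 - L\<^sup>2)
    (cut_side L * (4 * L)) 0 (1 - L\<^sup>2) (pierce_side_x L) (pierce_side_y L) (1 - L\<^sup>2) \<le> 0"
  apply (rule nonpos_by_bernstein_certificate[where i = 3 and j = 3 and cs = "[
      134/25 - 16/25 * sqrt 3, 21447/625 - 96/25 * sqrt 3, 48282/625 - 192/25 * sqrt 3,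
      42964/625 - 128/25 * sqrt 3, 10776/625]", OF _ _ assms])
  subgoal using sqrt3_square unfolding piercing_data_defs
    by (simp only: bernstein_certificate_simps) algebra
  subgoal using sqrt3_bounds by simp
  done

lemma side_side_cut_split_cert:
  assumes "0 \<le> L" "L \<le> 1"
  shows "disk_form_cleared (2 * L\<^sup>2) (1 - L\<^sup>2)
    (cut_side L * split_x L) (cut_side L * split_y L) (split_den L) (pierce_side_x L) (pierce_side_y L) (1 - L\<^sup>2) \<le> 0"
  apply (rule nonpos_by_bernstein_certificate[where i = 3 and j = 5 and cs = "[
      - 13677792/625 + 7978712/625 * sqrt 3, - 137899127001/390625 + 80095625188/390625 * sqrt 3,
      - 995069307866/390625 + 576498895036/390625 * sqrt 3,
      - 4224805629548/390625 + 2444101885112/390625 * sqrt 3,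
      - 11678769220128/390625 + 6750781631464/390625 * sqrt 3,
      - 21965947972228/390625 + 12691407411944/390625 * sqrt 3,
      - 28514648004008/390625 + 16470958079696/390625 * sqrt 3,
      - 25325021094896/390625 + 14626463908912/390625 * sqrt 3,
      - 14830110160128/390625 + 8564408546272/390625 * sqrt 3,
      - 5224777366224/390625 + 603429114624/78125 * sqrt 3,
      - 170392744608/78125 + 19678412288/15625 * sqrt 3]", OF _ _ assms])
  subgoal using sqrt3_square unfolding piercing_data_defs
    by (simp only: bernstein_certificate_simps) algebra
  subgoal using sqrt3_bounds by simp
  done

lemma side_corner_cert:
  assumes "0 \<le> L" "L \<le> 1"
  shows "disk_form_cleared (2 * L\<^sup>2) (1 - L\<^sup>2)
    (4 * L) 0 (1 - L\<^sup>2) (pierce_side_x L) (pierce_side_y L) (1 - L\<^sup>2) \<le> 0"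
  apply (rule nonpos_by_bernstein_certificate[where i = 3 and j = 3 and cs = "[
      134/25 - 16/25 * sqrt 3, 21447/625 - 96/25 * sqrt 3, 48282/625 - 192/25 * sqrt 3,
      42964/625 - 128/25 * sqrt 3, 10776/625]", OF _ _ assms])
  subgoal using sqrt3_square unfolding piercing_data_defs
    by (simp only: bernstein_certificate_simps) algebra
  subgoal using sqrt3_bounds by simp
  done

lemma side_split_cert:
  assumes "0 \<le> L" "L \<le> 1"
  shows "disk_form_cleared (2 * L\<^sup>2) (1 - L\<^sup>2)
    (split_x L) (split_y L) (split_den L) (pierce_side_x L) (pierce_side_y L) (1 - L\<^sup>2) \<le> 0"
  apply (rule nonpos_by_bernstein_certificate[where i = 3 and j = 5 and cs = "[
      - 75473506/3125 + 219198408/15625 * sqrt 3,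
      - 152746042491/390625 + 88484305652/390625 * sqrt 3,
      - 1111286742494/390625 + 642769945464/390625 * sqrt 3,
      - 4785908230544/390625 + 2765848816612/390625 * sqrt 3,
      - 13529852670472/390625 + 7815599534296/390625 * sqrt 3,
      - 26311937520596/390625 + 15195670781048/390625 * sqrt 3,
      - 35820756769736/390625 + 20684642457264/390625 * sqrt 3,
      - 33936105284176/390625 + 19595020783968/390625 * sqrt 3,
      - 21581116435968/390625 + 12460624425664/390625 * sqrt 3,
      - 8379711018384/390625 + 4838188156032/390625 * sqrt 3,
      - 1515332417952/390625 + 874888100096/390625 * sqrt 3]", OF _ _ assms])
  subgoal using sqrt3_square unfolding piercing_data_defs
    by (simp only: bernstein_certificate_simps) algebra
  subgoal using sqrt3_bounds by simp
  done

lemma side_slope_corner_cert: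
  assumes "0 \<le> L" "L \<le> 1"
  shows "slope_cleared L (4 * L) 0 (pierce_side_x L) (pierce_side_y L) (1 - L\<^sup>2) \<le> 0"
  apply (rule nonpos_by_bernstein_certificate[where i = 2 and j = 2 and cs = "[
      24, 2936/25, 4544/25, 2144/25]", OF _ _ assms])
  subgoal unfolding piercing_data_defs
    by (simp only: bernstein_certificate_simps) algebra
  subgoal by simp
  done

lemma side_slope_split_cert:
  assumes "0 \<le> L" "L \<le> 1"
  shows "slope_cleared L (split_x L) (split_y L) (pierce_side_x L) (pierce_side_y L) (1 - L\<^sup>2) \<le> 0"
  apply (rule nonpos_by_bernstein_certificate[where i = 2 and j = 3 and cs = "[
      13872/25 - 6936/25 * sqrt 3, 621112/125 - 1629756/625 * sqrt 3,
      11911696/625 - 6470464/625 * sqrt 3, 24960192/625 - 13854152/625 * sqrt 3,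
      29561408/625 - 16602288/625 * sqrt 3, 18005472/625 - 10165696/625 * sqrt 3,
      4042432/625 - 2282624/625 * sqrt 3]", OF _ _ assms])
  subgoal using sqrt3_square unfolding piercing_data_defs
    by (simp only: bernstein_certificate_simps) algebra
  subgoal using sqrt3_bounds by simp
  done

lemma top_top_cut_split_cert:
  assumes "0 \<le> L" "L \<le> 1"
  shows "disk_form_cleared (2 * L\<^sup>2) (1 - L\<^sup>2)
    (cut_top L * split_x L) (cut_top L * split_y L) (split_den L) 0 (pierce_top_y L) (1 - L\<^sup>2) \<le> 0"
  apply (rule nonpos_by_bernstein_certificate[where i = 3 and j = 5 and cs = "[
      22619452/3125 - 12832756/3125 * sqrt 3, 2246953036/15625 - 1285426916/15625 * sqrt 3,
      19299836704/15625 - 11088538864/15625 * sqrt 3,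
      92750617176/15625 - 53405984176/15625 * sqrt 3,
      268564523536/15625 - 154809104352/15625 * sqrt 3,
      458604427488/15625 - 264481907824/15625 * sqrt 3,
      368403397216/15625 - 212445922496/15625 * sqrt 3,
      - 125785390304/15625 + 72779032128/15625 * sqrt 3,
      - 568747436288/15625 + 13137320384/625 * sqrt 3,
      - 487865625728/15625 + 281685460864/15625 * sqrt 3,
      - 148317648384/15625 + 85632632832/15625 * sqrt 3]", OF _ _ assms])
  subgoal using sqrt3_square unfolding piercing_data_defs
    by (simp only: bernstein_certificate_simps) algebra
  subgoal using sqrt3_bounds by simp
  done

lemma top_split_cert:
  assumes "0 \<le> L" "L \<le> 1"
  shows "disk_form_cleared (2 * L\<^sup>2) (1 - L\<^sup>2)
    (split_x L) (split_y L) (split_den L) 0 (pierce_top_y L) (1 - L\<^sup>2) \<le> 0"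
  apply (rule nonpos_by_bernstein_certificate[where i = 3 and j = 5 and cs = "[
      - 943296/125 + 550256/125 * sqrt 3, - 1821657168/15625 + 1059342216/15625 * sqrt 3,
      - 13207229552/15625 + 7661016272/15625 * sqrt 3,
      - 62626982672/15625 + 36255048336/15625 * sqrt 3,
      - 224339652256/15625 + 129693521408/15625 * sqrt 3,
      - 627981381568/15625 + 362772290944/15625 * sqrt 3,
      - 1320770105728/15625 + 762727335232/15625 * sqrt 3,
      - 1957247524288/15625 + 1130131291904/15625 * sqrt 3,
      - 1895167040384/15625 + 1094224321792/15625 * sqrt 3,
      - 1067055547392/15625 + 616076901376/15625 * sqrt 3,
      - 263917500416/15625 + 152373895168/15625 * sqrt 3]", OF _ _ assms])
  subgoal using sqrt3_square unfolding piercing_data_defs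
    by (simp only: bernstein_certificate_simps) algebra
  subgoal using sqrt3_bounds by simp
  done

lemma top_slope_split_cert:
  assumes "0 \<le> L" "L \<le> 1"
  shows "slope_cleared L (split_x L) (split_y L) 0 (pierce_top_y L) (1 - L\<^sup>2) \<le> 0"
  apply (rule nonpos_by_bernstein_certificate[where i = 2 and j = 3 and cs = "[
      13872/25 - 6936/25 * sqrt 3, 547944/125 - 282336/125 * sqrt 3,
      1745968/125 - 917888/125 * sqrt 3, 2791504/125 - 1477056/125 * sqrt 3,
      2010496/125 - 1035104/125 * sqrt 3, - 18816/25 + 24896/25 * sqrt 3,
      - 738432/125 + 443904/125 * sqrt 3]", OF _ _ assms])
  subgoal using sqrt3_square unfolding piercing_data_defs
    by (simp only: bernstein_certificate_simps) algebra
  subgoal using sqrt3_bounds by simp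
  done

lemma split_data_pos:
  assumes L: "0 < L" "L < 1"
  shows "split_den L > 0" "split_x L > 0" "split_y L > 0"
proof -
  have c: "0 < (2 - sqrt 3) * (17 / 10)" "(2 - sqrt 3) * (17 / 10) < (3 / 5 :: real)"
    using sqrt3_bounds by (simp_all add: algebra_simps)
  have "0 < 1 - L" using L by simp
  then have num: "0 < split_slope_num L" "split_slope_num L < (1 - L) * (3 / 5)"
    unfolding split_slope_num_def using c
    by (simp_all only: mult.commute[of _ "1 - L"] mult_pos_pos mult_strict_left_mono)
  have den: "17 / 10 \<le> split_slope_den L" using L unfolding split_slope_den_def by simp
  show "split_den L > 0"
    unfolding split_den_def using L den by (intro add_pos_nonneg) auto
  have "(1 - L) ^ 4 < (1 + L) ^ 4" using L by (intro power_strict_mono) auto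
  then show "split_x L > 0" unfolding split_x_def using num den by simp
  have "split_y L = 4 * L * (((1 - L) * split_slope_den L)\<^sup>2 - ((1 + L) * split_slope_num L)\<^sup>2)"
    unfolding split_y_def split_den_def by algebra
  moreover have "(1 + L) * split_slope_num L < (1 - L) * split_slope_den L"
  proof -
    have "(1 + L) * split_slope_num L \<le> 2 * split_slope_num L"
      using L num by (intro mult_right_mono) auto
    also have "\<dots> < (1 - L) * (17 / 10)" using num by simp
    also have "\<dots> \<le> (1 - L) * split_slope_den L" using L den by (intro mult_left_mono) auto
    finally show ?thesis .
  qed
  then have "((1 + L) * split_slope_num L)\<^sup>2 < ((1 - L) * split_slope_den L)\<^sup>2"
    using L num by (intro power_strict_mono) auto
  ultimately show "split_y L > 0" using L by simp
qed

lemma corner_on_boundary: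
  assumes L: "0 < L" "L < 1"
  shows "disk_form (8 * L\<^sup>2 / (1 - L\<^sup>2)\<^sup>2) (4 * L / (1 - L\<^sup>2)) 0 0 0 = 0"
proof -
  have "1 - L\<^sup>2 > 0" using L by (simp add: power_less_one_iff)
  then show ?thesis unfolding disk_form_def by (simp add: field_simps power2_eq_square)
qed

lemma split_point_on_boundary:
  assumes L: "0 < L" "L < 1"
  shows "disk_form (8 * L\<^sup>2 / (1 - L\<^sup>2)\<^sup>2) (split_x L / split_den L) (split_y L / split_den L) 0 0 = 0"
proof -
  define D d where "D = 1 - L\<^sup>2" and "d = split_den L"
  have "D > 0" unfolding D_def using L by (simp add: power_less_one_iff)
  moreover have "d > 0" unfolding d_def using split_data_pos[OF L] by simp
  moreover have "disk_form (8 * L\<^sup>2 / D\<^sup>2) (split_x L / d) (split_y L / d) 0 0 * (D\<^sup>2 * d\<^sup>2) =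
      D\<^sup>2 * ((split_x L)\<^sup>2 + (split_y L)\<^sup>2) - 16 * L\<^sup>2 * d * (d + split_y L)"
    using calculation unfolding disk_form_def by (simp add: field_simps power2_eq_square)
  moreover have "D\<^sup>2 * ((split_x L)\<^sup>2 + (split_y L)\<^sup>2) - 16 * L\<^sup>2 * d * (d + split_y L) = 0"
    unfolding D_def d_def split_den_def split_x_def split_y_def by algebra
  ultimately show ?thesis unfolding D_def d_def by simp
qed

lemma right_cone_pierced:
  assumes L: "0 < L" "L < 1"
  defines "t \<equiv> 2 * L\<^sup>2 / (1 - L\<^sup>2)" and "s \<equiv> 8 * L\<^sup>2 / (1 - L\<^sup>2)\<^sup>2"
  assumes u: "0 \<le> b" "b * split_x L \<le> a * split_y L" "disk_form s a b 0 0 \<le> 0"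
  shows "disk_form t a b 0 (pierce_low_y L / (1 - L\<^sup>2)) \<le> 0 \<or>
    disk_form t a b (pierce_side_x L / (1 - L\<^sup>2)) (pierce_side_y L / (1 - L\<^sup>2)) \<le> 0"
proof -
  define e1 e2x e2y where "e1 = 4 * L / (1 - L\<^sup>2)"
    and "e2x = split_x L / split_den L" and "e2y = split_y L / split_den L"
  define q0 px py where "q0 = pierce_low_y L / (1 - L\<^sup>2)"
    and "px = pierce_side_x L / (1 - L\<^sup>2)" and "py = pierce_side_y L / (1 - L\<^sup>2)"
  have D: "1 - L\<^sup>2 > 0" using L by (simp add: power_less_one_iff)
  have L0: "0 \<le> L" "L \<le> 1" and one: "(1::real) > 0" using L by auto
  note split = split_data_pos[OF L]
  have e: "e1 > 0" "e2x > 0" "e2y > 0" unfolding e1_def e2x_def e2y_def using L D split by auto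
  have cut: "0 < cut_side L" "cut_side L < 1"
    unfolding cut_side_def using L by (simp_all add: field_simps)
  have boundary: "disk_form s e1 0 0 0 = 0" "disk_form s e2x e2y 0 0 = 0"
    unfolding s_def e1_def e2x_def e2y_def using corner_on_boundary[OF L] split_point_on_boundary[OF L]
    by simp_all
  have inner: "disk_form t 0 0 0 q0 \<le> 0" "disk_form t (cut_side L * e1) (cut_side L * 0) 0 q0 \<le> 0"
      "disk_form t (cut_side L * e2x) (cut_side L * e2y) 0 q0 \<le> 0"
    using disk_form_nonpos_if_cleared[OF D one D low_origin_cert[OF L0]]
      disk_form_nonpos_if_cleared[OF D D D low_side_cut_corner_cert[OF L0]]
      disk_form_nonpos_if_cleared[OF D split(1) D low_side_cut_split_cert[OF L0]]
    unfolding t_def e1_def e2x_def e2y_def q0_def by simp_all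
  have outer: "disk_form t (cut_side L * e1) (cut_side L * 0) px py \<le> 0"
      "disk_form t (cut_side L * e2x) (cut_side L * e2y) px py \<le> 0"
      "disk_form t e1 0 px py \<le> 0" "disk_form t e2x e2y px py \<le> 0"
    using disk_form_nonpos_if_cleared[OF D D D side_side_cut_corner_cert[OF L0]]
      disk_form_nonpos_if_cleared[OF D split(1) D side_side_cut_split_cert[OF L0]]
      disk_form_nonpos_if_cleared[OF D D D side_corner_cert[OF L0]]
      disk_form_nonpos_if_cleared[OF D split(1) D side_split_cert[OF L0]]
    unfolding t_def e1_def e2x_def e2y_def px_def py_def by simp_all
  have slope:
      "disk_form t e1 0 px py - disk_form s e1 0 0 0 \<le> disk_form t 0 0 px py - disk_form s 0 0 0 0"
      "disk_form t e2x e2y px py - disk_form s e2x e2y 0 0 \<le> disk_form t 0 0 px py - disk_form s 0 0 0 0"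
    using slope_le_if_cleared[OF L D D side_slope_corner_cert[OF L0]]
      slope_le_if_cleared[OF L split(1) D side_slope_split_cert[OF L0]]
    unfolding t_def s_def e1_def e2x_def e2y_def px_def py_def by simp_all
  define l m where "l = (a - b * e2x / e2y) / e1" and "m = b / e2y"
  have "b * e2x \<le> a * e2y"
    using u(2) split(1) unfolding e2x_def e2y_def by (simp add: divide_right_mono)
  then have lm: "l \<ge> 0" "m \<ge> 0" unfolding l_def m_def using e u(1) by (simp_all add: field_simps)
  have ab: "a = l * e1 + m * e2x" "b = l * 0 + m * e2y"
    unfolding l_def m_def using e by (simp_all add: field_simps)
  show ?thesis
    using cone_covered_by_two_disks[OF boundary cut inner outer slope lm] u(3)
    unfolding ab[symmetric] q0_def px_def py_def by simp
qed

lemma middle_cone_pierced: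
  assumes L: "0 < L" "L < 1"
  defines "t \<equiv> 2 * L\<^sup>2 / (1 - L\<^sup>2)" and "s \<equiv> 8 * L\<^sup>2 / (1 - L\<^sup>2)\<^sup>2"
  assumes u: "\<bar>a\<bar> * split_y L \<le> b * split_x L" "disk_form s a b 0 0 \<le> 0"
  shows "disk_form t a b 0 (pierce_low_y L / (1 - L\<^sup>2)) \<le> 0 \<or>
    disk_form t a b 0 (pierce_top_y L / (1 - L\<^sup>2)) \<le> 0"
proof -
  define ex ey where "ex = split_x L / split_den L" and "ey = split_y L / split_den L"
  define q0 q1 where "q0 = pierce_low_y L / (1 - L\<^sup>2)" and "q1 = pierce_top_y L / (1 - L\<^sup>2)"
  have D: "1 - L\<^sup>2 > 0" using L by (simp add: power_less_one_iff)
  have L0: "0 \<le> L" "L \<le> 1" and one: "(1::real) > 0" using L by auto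
  note split = split_data_pos[OF L]
  have e: "ex > 0" "ey > 0" unfolding ex_def ey_def using split by auto
  have cut: "0 < cut_top L" "cut_top L < 1"
    unfolding cut_top_def using L by (simp_all add: field_simps)
  have mirror: "disk_form r (- x) y 0 q = disk_form r x y 0 q" for r x y q
    using disk_form_mirror[of r x y 0 q] by simp
  have boundary: "disk_form s ex ey 0 0 = 0" "disk_form s (- ex) ey 0 0 = 0"
    unfolding s_def ex_def ey_def using split_point_on_boundary[OF L] mirror by simp_all
  have "disk_form t 0 0 0 q0 \<le> 0" "disk_form t (cut_top L * ex) (cut_top L * ey) 0 q0 \<le> 0"
    using disk_form_nonpos_if_cleared[OF D one D low_origin_cert[OF L0]]
      disk_form_nonpos_if_cleared[OF D split(1) D low_top_cut_split_cert[OF L0]]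
    unfolding t_def ex_def ey_def q0_def by simp_all
  then have inner: "disk_form t 0 0 0 q0 \<le> 0" "disk_form t (cut_top L * ex) (cut_top L * ey) 0 q0 \<le> 0"
      "disk_form t (cut_top L * - ex) (cut_top L * ey) 0 q0 \<le> 0"
    using mirror by simp_all
  have "disk_form t (cut_top L * ex) (cut_top L * ey) 0 q1 \<le> 0" "disk_form t ex ey 0 q1 \<le> 0"
    using disk_form_nonpos_if_cleared[OF D split(1) D top_top_cut_split_cert[OF L0]]
      disk_form_nonpos_if_cleared[OF D split(1) D top_split_cert[OF L0]]
    unfolding t_def ex_def ey_def q1_def by simp_all
  then have outer: "disk_form t (cut_top L * ex) (cut_top L * ey) 0 q1 \<le> 0"
      "disk_form t (cut_top L * - ex) (cut_top L * ey) 0 q1 \<le> 0"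
      "disk_form t ex ey 0 q1 \<le> 0" "disk_form t (- ex) ey 0 q1 \<le> 0"
    using mirror by simp_all
  have "disk_form t ex ey 0 q1 - disk_form s ex ey 0 0 \<le> disk_form t 0 0 0 q1 - disk_form s 0 0 0 0"
    using slope_le_if_cleared[OF L split(1) D top_slope_split_cert[OF L0]]
    unfolding t_def s_def ex_def ey_def q1_def by simp
  then have slope:
      "disk_form t ex ey 0 q1 - disk_form s ex ey 0 0 \<le> disk_form t 0 0 0 q1 - disk_form s 0 0 0 0"
      "disk_form t (- ex) ey 0 q1 - disk_form s (- ex) ey 0 0 \<le> disk_form t 0 0 0 q1 - disk_form s 0 0 0 0"
    using mirror by simp_all
  define l m where "l = (a / ex + b / ey) / 2" and "m = (b / ey - a / ex) / 2"
  have "\<bar>a\<bar> / ex \<le> b / ey"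
    using u(1) split e unfolding ex_def ey_def by (simp add: field_simps)
  moreover have "a / ex \<le> \<bar>a\<bar> / ex" "- a / ex \<le> \<bar>a\<bar> / ex"
    using e by (intro divide_right_mono; simp)+
  ultimately have lm: "l \<ge> 0" "m \<ge> 0" unfolding l_def m_def by simp_all
  have ab: "a = l * ex + m * - ex" "b = l * ey + m * ey"
    unfolding l_def m_def using e by (simp_all add: field_simps)
  show ?thesis
    using cone_covered_by_two_disks[OF boundary cut inner outer slope lm] u(2)
    unfolding ab[symmetric] q0_def q1_def by simp
qed

definition piercing_points :: "real \<Rightarrow> (real \<times> real) set" where
  "piercing_points L =
    {(0, pierce_low_y L / (1 - L\<^sup>2)), (pierce_side_x L / (1 - L\<^sup>2), pierce_side_y L / (1 - L\<^sup>2)),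
     (- pierce_side_x L / (1 - L\<^sup>2), pierce_side_y L / (1 - L\<^sup>2)), (0, pierce_top_y L / (1 - L\<^sup>2))}"

lemma piercing_points_upper:
  assumes "0 < L" "L < 1" "(p, q) \<in> piercing_points L"
  shows "0 \<le> q"
proof -
  have "1 - L\<^sup>2 > 0" using assms by (simp add: power_less_one_iff)
  moreover have "0 \<le> sqrt 3 / 2 * (1 - L)" "0 \<le> sqrt 3 * (1 - L)" using assms by simp_all
  ultimately show ?thesis
    using assms unfolding piercing_points_def pierce_low_y_def pierce_side_y_def pierce_top_y_def
    by auto
qed

lemma upper_nbhd_pierced:
  assumes L: "0 < L" "L < 1" and u: "upper_nbhd (8 * L\<^sup>2 / (1 - L\<^sup>2)\<^sup>2) a b"
  shows "\<exists>(p, q) \<in> piercing_points L. disk_form (2 * L\<^sup>2 / (1 - L\<^sup>2)) a b p q \<le> 0"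
proof -
  have u': "0 \<le> b" "disk_form (8 * L\<^sup>2 / (1 - L\<^sup>2)\<^sup>2) a b 0 0 \<le> 0"
    using u unfolding upper_nbhd_def by auto
  have "b * split_x L \<le> a * split_y L \<or> \<bar>a\<bar> * split_y L \<le> b * split_x L
      \<or> b * split_x L \<le> - a * split_y L"
    by (cases "0 \<le> a") (simp_all add: abs_if, linarith+)
  then consider "b * split_x L \<le> a * split_y L" | "\<bar>a\<bar> * split_y L \<le> b * split_x L"
    | "b * split_x L \<le> - a * split_y L"
    by blast
  then show ?thesis
  proof cases
    case 1
    then show ?thesis using right_cone_pierced[OF L u'(1) 1 u'(2)] unfolding piercing_points_def by auto
  next
    case 2
    then show ?thesis using middle_cone_pierced[OF L 2 u'(2)] unfolding piercing_points_def by auto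
  next
    case 3
    define t x y where "t = 2 * L\<^sup>2 / (1 - L\<^sup>2)"
      and "x = pierce_side_x L / (1 - L\<^sup>2)" and "y = pierce_side_y L / (1 - L\<^sup>2)"
    have "disk_form (8 * L\<^sup>2 / (1 - L\<^sup>2)\<^sup>2) (- a) b 0 0 \<le> 0"
      using u'(2) disk_form_mirror[of _ a b 0 0] by simp
    with 3 have "disk_form t (- a) b 0 (pierce_low_y L / (1 - L\<^sup>2)) \<le> 0 \<or> disk_form t (- a) b x y \<le> 0"
      using right_cone_pierced[OF L u'(1)] unfolding t_def x_def y_def by simp
    moreover have "disk_form t (- a) b 0 q = disk_form t a b 0 q" for q
      using disk_form_mirror[of t a b 0 q] by simp
    moreover have "disk_form t (- a) b x y = disk_form t a b (- x) y"
      using disk_form_mirror[of t a b "- x" y] by simp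
    ultimately show ?thesis unfolding piercing_points_def t_def x_def y_def by auto
  qed
qed

lemma cosh_tanh_half:
  fixes r :: real
  defines "L \<equiv> tanh (r / 2)"
  shows "cosh r - 1 = 2 * L\<^sup>2 / (1 - L\<^sup>2)" "cosh (2 * r) - 1 = 8 * L\<^sup>2 / (1 - L\<^sup>2)\<^sup>2"
proof -
  define C S where "C = cosh (r / 2)" and "S = sinh (r / 2)"
  have C: "C > 0" "C\<^sup>2 = S\<^sup>2 + 1" unfolding C_def S_def by (simp_all add: cosh_square_eq)
  have L: "L = S / C" unfolding L_def C_def S_def tanh_def by simp
  have "1 - L\<^sup>2 = (C\<^sup>2 - S\<^sup>2) / C\<^sup>2" unfolding L using C(1) by (simp add: field_simps power_divide)
  then have D: "1 - L\<^sup>2 = 1 / C\<^sup>2" using C(2) by simp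
  have r: "cosh r = 2 * C\<^sup>2 - 1" unfolding C_def using cosh_double_cosh[of "r / 2"] by simp
  have "2 * L\<^sup>2 / (1 - L\<^sup>2) = 2 * S\<^sup>2" unfolding D unfolding L using C(1) by (simp add: field_simps)
  then show "cosh r - 1 = 2 * L\<^sup>2 / (1 - L\<^sup>2)" unfolding r using C(2) by simp
  have "8 * L\<^sup>2 / (1 - L\<^sup>2)\<^sup>2 = 8 * S\<^sup>2 * C\<^sup>2" unfolding D unfolding L using C(1)
    by (simp add: field_simps power2_eq_square)
  moreover have "cosh (2 * r) - 1 = 8 * S\<^sup>2 * C\<^sup>2" unfolding cosh_double_cosh r C(2) by algebra
  ultimately show "cosh (2 * r) - 1 = 8 * L\<^sup>2 / (1 - L\<^sup>2)\<^sup>2" by simp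
qed

section \<open>The lowest vertex\<close>

definition lowest_vertex :: "'a set \<Rightarrow> ('a \<Rightarrow> complex) \<Rightarrow> 'a \<Rightarrow> bool" where
  "lowest_vertex V c v \<longleftrightarrow> v \<in> V \<and> (\<forall>x\<in>V. Im (cayley (c v)) \<le> Im (cayley (c x)))"

lemma lowest_vertex_exists:
  assumes "finite V" "V \<noteq> {}"
  shows "\<exists>v. lowest_vertex V c v"
  using arg_min_if_finite(1)[OF assms, of "\<lambda>x. Im (cayley (c x))"]
    arg_min_least[OF assms, of _ "\<lambda>x. Im (cayley (c x))"]
  unfolding lowest_vertex_def by blast

lemma hudg_adj_iff_disk_form:
  assumes "r > 0" "\<forall>v\<in>V. c v \<in> hyp_plane" "v \<in> V" "x \<in> V" "y \<in> V"
  shows "hudg_adj c r x y \<longleftrightarrow> x \<noteq> y \<and>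
    disk_form (cosh (2 * r) - 1) (rel_x (c v) (c x)) (rel_y (c v) (c x))
      (rel_x (c v) (c y)) (rel_y (c v) (c y)) \<le> 0"
  using hdist_le_iff_disk_form[of "c v" "c x" "c y" "2 * r"] assms
  unfolding hudg_adj_def hyp_plane_def by auto

lemma neighbour_in_upper_nbhd:
  assumes "r > 0" "\<forall>v\<in>V. c v \<in> hyp_plane" "lowest_vertex V c v" "u \<in> hudg_neighbors V c r v"
  shows "upper_nbhd (cosh (2 * r) - 1) (rel_x (c v) (c u)) (rel_y (c v) (c u))"
proof -
  have v: "v \<in> V" "norm (c v) < 1" and u: "u \<in> V" "hudg_adj c r u v"
    using assms unfolding lowest_vertex_def hudg_neighbors_def hyp_plane_def by auto
  have "0 \<le> rel_y (c v) (c u)"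
    using rel_y_nonneg_iff[OF v(2)] assms(3) u(1) unfolding lowest_vertex_def by blast
  moreover have "disk_form (cosh (2 * r) - 1) (rel_x (c v) (c u)) (rel_y (c v) (c u)) 0 0 \<le> 0"
    using hudg_adj_iff_disk_form[OF assms(1,2) v(1) u(1) v(1)] u(2) v(2) by simp
  ultimately show ?thesis unfolding upper_nbhd_def ..
qed

lemma lowest_vertex_neighbours_three_cliques:
  assumes r: "r > 0" and c: "\<forall>v\<in>V. c v \<in> hyp_plane" and v: "lowest_vertex V c v"
  shows "\<exists>K1 K2 K3. hudg_clique V c r K1 \<and> hudg_clique V c r K2 \<and> hudg_clique V c r K3 \<and>
    hudg_neighbors V c r v \<subseteq> K1 \<union> K2 \<union> K3"
proof -
  define N a b s where "N = hudg_neighbors V c r v" and "a u = rel_x (c v) (c u)"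
    and "b u = rel_y (c v) (c u)" and "s = cosh (2 * r) - 1" for u
  have s: "s > 0" unfolding s_def using cosh_real_nonneg_less_iff[of 0 "2 * r"] r by simp
  have N: "N \<subseteq> V" "\<And>u. u \<in> N \<Longrightarrow> upper_nbhd s (a u) (b u)"
    using neighbour_in_upper_nbhd[OF r c v] unfolding N_def a_def b_def s_def hudg_neighbors_def
    by auto
  have clique: "hudg_clique V c r {u \<in> N. P (a u) (b u)}"
    if "\<And>a1 b1 a2 b2. upper_nbhd s a1 b1 \<Longrightarrow> upper_nbhd s a2 b2 \<Longrightarrow> P a1 b1 \<Longrightarrow> P a2 b2 \<Longrightarrow>
      disk_form s a1 b1 a2 b2 \<le> 0" for P
    using that N hudg_adj_iff_disk_form[OF r c] v
    unfolding hudg_clique_def lowest_vertex_def a_def b_def s_def by blast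
  have "hudg_clique V c r {u \<in> N. b u \<le> sqrt 3 * a u}"
    "hudg_clique V c r {u \<in> N. sqrt 3 * \<bar>a u\<bar> \<le> b u}"
    "hudg_clique V c r {u \<in> N. b u \<le> - (sqrt 3 * a u)}"
    by (rule clique, rule right_sector_close middle_sector_close left_sector_close; use s in simp)+
  moreover have "N \<subseteq> {u \<in> N. b u \<le> sqrt 3 * a u} \<union> {u \<in> N. sqrt 3 * \<bar>a u\<bar> \<le> b u}
      \<union> {u \<in> N. b u \<le> - (sqrt 3 * a u)}"
    by (auto simp: abs_if)
  ultimately show ?thesis unfolding N_def by blast
qed

lemma lowest_vertex_neighbours_pierced:
  assumes r: "r > 0" and c: "\<forall>v\<in>V. c v \<in> hyp_plane" and v: "lowest_vertex V c v"
  shows "\<exists>p1 p2 p3 p4. {p1, p2, p3, p4} \<subseteq> hyp_plane \<and>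
    (\<forall>u\<in>hudg_neighbors V c r v. {p1, p2, p3, p4} \<inter> hdisk (c u) r \<noteq> {})"
proof -
  define L f where "L = tanh (r / 2)" and "f = (\<lambda>(p, q). rel_point (c v) p q)"
  have L: "0 < L" "L < 1" unfolding L_def using r tanh_real_lt_1 by auto
  have cv: "norm (c v) < 1" using c v unfolding lowest_vertex_def hyp_plane_def by auto
  have in_plane: "norm (f P) < 1" "rel_x (c v) (f P) = fst P" "rel_y (c v) (f P) = snd P"
    if "P \<in> piercing_points L" for P
    using rel_point_coords[OF cv, of "snd P" "fst P"] piercing_points_upper[OF L, of "fst P" "snd P"]
      that
    unfolding f_def by (auto simp: case_prod_beta)
  have pierced: "f ` piercing_points L \<inter> hdisk (c u) r \<noteq> {}" if u: "u \<in> hudg_neighbors V c r v" for u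
  proof -
    have uV: "norm (c u) < 1" using u c unfolding hudg_neighbors_def hyp_plane_def by auto
    obtain P where P: "P \<in> piercing_points L"
      "disk_form (cosh r - 1) (rel_x (c v) (c u)) (rel_y (c v) (c u)) (fst P) (snd P) \<le> 0"
      using upper_nbhd_pierced[OF L neighbour_in_upper_nbhd[OF r c v u,
          unfolded cosh_tanh_half(2)[of r, folded L_def]]]
      unfolding cosh_tanh_half(1)[of r, folded L_def] by auto
    then have "hdist (c u) (f P) \<le> r"
      using hdist_le_iff_disk_form[OF cv uV in_plane(1)[OF P(1)]] in_plane[OF P(1)] r by simp
    then have "f P \<in> hdisk (c u) r" using in_plane(1)[OF P(1)] unfolding hdisk_def hyp_plane_def by simp
    then show ?thesis using P(1) by blast
  qed
  obtain p1 p2 p3 p4 where points: "f ` piercing_points L = {p1, p2, p3, p4}"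
    unfolding piercing_points_def image_insert image_empty by blast
  have "f ` piercing_points L \<subseteq> hyp_plane" using in_plane(1) unfolding hyp_plane_def by auto
  then have "{p1, p2, p3, p4} \<subseteq> hyp_plane \<and>
      (\<forall>u\<in>hudg_neighbors V c r v. {p1, p2, p3, p4} \<inter> hdisk (c u) r \<noteq> {})"
    using pierced unfolding points by blast
  then show ?thesis by blast
qed

theorem lemma25:
  fixes V :: "'a set" and c :: "'a \<Rightarrow> complex" and r :: real
  assumes "r > 0" and "finite V" and "V \<noteq> {}"
    and "\<forall>v\<in>V. c v \<in> hyp_plane"
  shows "\<exists>v\<in>V.
     (\<exists>K1 K2 K3. hudg_clique V c r K1 \<and> hudg_clique V c r K2 \<and> hudg_clique V c r K3 \<and>
        hudg_neighbors V c r v \<subseteq> K1 \<union> K2 \<union> K3) \<and>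
     (\<exists>p1 p2 p3 p4. {p1, p2, p3, p4} \<subseteq> hyp_plane \<and>
        (\<forall>u\<in>hudg_neighbors V c r v. {p1, p2, p3, p4} \<inter> hdisk (c u) r \<noteq> {}))"
proof -
  obtain v where v: "lowest_vertex V c v" using lowest_vertex_exists[OF assms(2,3)] by blast
  then have "v \<in> V" unfolding lowest_vertex_def by simp
  with lowest_vertex_neighbours_three_cliques[OF assms(1,4) v]
    lowest_vertex_neighbours_pierced[OF assms(1,4) v]
  show ?thesis by blast
qed

end
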